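(* Let $h,n\geq2$. (i) If $U\leq G$ is regular maximal, then every $U$-symmetric social preference function $F$ satisfies $G(F)=U$. (ii) Every regular maximal subgroup of $G$ is a symmetry group with respect to $(h,n)$, and every symmetry group with respect to $(h,n)$ is regular. In particular, the set of symmetry groups with respect to $(h,n)$ is nonempty.
   Context: Permutations compose as $(\sigma\tau)(x)=\sigma(\tau(x))$. Let $G=S_h\times S_n$ and $\mathcal{P}=(S_n)^h$ (preference profiles), with $G$ acting by $(p^{(\varphi,\psi)})_i=\psi\,p_{\varphi^{-1}(i)}$. A subgroup $U\leq G$ is regular if for every $p\in\mathcal{P}$, $\mathrm{Stab}_U(p)=\{g\in U:p^g=p\}\subseteq S_h\times\{id\}$; it is regular maximal if it is regular and no regular subgroup of $G$ properly contains it. A social preference function (SPF) is any $F:\mathcal{P}\to S_n$; for $U\leq G$, $F$ is $U$-symmetric if $F(p^{(\varphi,\psi)})=\psi F(p)$ for all $p\in\mathcal{P}$ and $(\varphi,\psi)\in U$. The symmetry group of $F$ is $G(F)=\{(\varphi,\psi)\in G: F(p^{(\varphi,\psi)})=\psi F(p)\ \forall p\}$; $U$ is a symmetry group with respect to $(h,n)$ if $U=G(F)$ for some SPF $F$. *)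

theory Defs
  imports "HOL-Combinatorics.Permutations" "HOL-Algebra.Group"
begin

text \<open>Voters are 0..<h, alternatives are 0..<n. A preference profile is a function
  assigning to each voter i < h a permutation of {..<n}; for canonicity it is the identity
  at indices i >= h.\<close>

definition profiles :: "nat \<Rightarrow> nat \<Rightarrow> (nat \<Rightarrow> nat \<Rightarrow> nat) set" where
  "profiles h n = {p. (\<forall>i<h. p i permutes {..<n}) \<and> (\<forall>i\<ge>h. p i = id)}"

definition Gcarrier :: "nat \<Rightarrow> nat \<Rightarrow> ((nat \<Rightarrow> nat) \<times> (nat \<Rightarrow> nat)) set" where
  "Gcarrier h n = {(\<phi>, \<psi>). \<phi> permutes {..<h} \<and> \<psi> permutes {..<n}}"

definition Ggrp :: "nat \<Rightarrow> nat \<Rightarrow> ((nat \<Rightarrow> nat) \<times> (nat \<Rightarrow> nat)) monoid" where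
  "Ggrp h n = \<lparr>carrier = Gcarrier h n,
               monoid.mult = (\<lambda>(\<phi>1, \<psi>1) (\<phi>2, \<psi>2). (\<phi>1 \<circ> \<phi>2, \<psi>1 \<circ> \<psi>2)),
               monoid.one = (id, id)\<rparr>"

definition act :: "nat \<Rightarrow> ((nat \<Rightarrow> nat) \<times> (nat \<Rightarrow> nat)) \<Rightarrow> (nat \<Rightarrow> nat \<Rightarrow> nat) \<Rightarrow> (nat \<Rightarrow> nat \<Rightarrow> nat)" where
  "act h g p = (\<lambda>i. if i < h then snd g \<circ> p (Hilbert_Choice.inv (fst g) i) else id)"

definition regular :: "nat \<Rightarrow> nat \<Rightarrow> ((nat \<Rightarrow> nat) \<times> (nat \<Rightarrow> nat)) set \<Rightarrow> bool" where
  "regular h n U \<longleftrightarrow> subgroup U (Ggrp h n) \<and>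
     (\<forall>p \<in> profiles h n. \<forall>g \<in> U. act h g p = p \<longrightarrow> snd g = id)"

definition regular_maximal :: "nat \<Rightarrow> nat \<Rightarrow> ((nat \<Rightarrow> nat) \<times> (nat \<Rightarrow> nat)) set \<Rightarrow> bool" where
  "regular_maximal h n U \<longleftrightarrow> regular h n U \<and>
     (\<forall>V. regular h n V \<and> U \<subseteq> V \<longrightarrow> V = U)"

text \<open>A social preference function: maps profiles to permutations of {..<n}
  (values outside profiles are irrelevant).\<close>
definition is_SPF :: "nat \<Rightarrow> nat \<Rightarrow> ((nat \<Rightarrow> nat \<Rightarrow> nat) \<Rightarrow> (nat \<Rightarrow> nat)) \<Rightarrow> bool" where
  "is_SPF h n F \<longleftrightarrow> (\<forall>p \<in> profiles h n. F p permutes {..<n})"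

definition U_symmetric :: "nat \<Rightarrow> nat \<Rightarrow> ((nat \<Rightarrow> nat) \<times> (nat \<Rightarrow> nat)) set
     \<Rightarrow> ((nat \<Rightarrow> nat \<Rightarrow> nat) \<Rightarrow> (nat \<Rightarrow> nat)) \<Rightarrow> bool" where
  "U_symmetric h n U F \<longleftrightarrow> (\<forall>p \<in> profiles h n. \<forall>g \<in> U. F (act h g p) = snd g \<circ> F p)"

definition symmetry_group_of :: "nat \<Rightarrow> nat \<Rightarrow> ((nat \<Rightarrow> nat \<Rightarrow> nat) \<Rightarrow> (nat \<Rightarrow> nat))
     \<Rightarrow> ((nat \<Rightarrow> nat) \<times> (nat \<Rightarrow> nat)) set" where
  "symmetry_group_of h n F = {g \<in> Gcarrier h n. \<forall>p \<in> profiles h n. F (act h g p) = snd g \<circ> F p}"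

definition is_symmetry_group :: "nat \<Rightarrow> nat \<Rightarrow> ((nat \<Rightarrow> nat) \<times> (nat \<Rightarrow> nat)) set \<Rightarrow> bool" where
  "is_symmetry_group h n U \<longleftrightarrow> (\<exists>F. is_SPF h n F \<and> U = symmetry_group_of h n F)"

end

theory Submission
  imports Defs
begin

text \<open>A regular subgroup \<open>U\<close> acts on profiles so that the alternative-part \<open>\<psi>\<close> of a group
  element is determined by where it sends a single profile. Choosing a representative in each
  \<open>U\<close>-orbit and letting \<open>F p\<close> be the \<open>\<psi>\<close>-part of any element of \<open>U\<close> carrying the representative
  to \<open>p\<close> therefore gives a well-defined \<open>U\<close>-symmetric SPF. Conversely the symmetry group of any
  SPF is regular, because \<open>F p\<close> is a bijection and \<open>F p = \<psi> \<circ> F p\<close> whenever \<open>(\<phi>, \<psi>)\<close> fixes \<open>p\<close>.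
  So the symmetry group of a \<open>U\<close>-symmetric SPF is a regular group containing \<open>U\<close>, which equals
  \<open>U\<close> when \<open>U\<close> is regular maximal.\<close>

lemma Ggrp_mult: "x \<otimes>\<^bsub>Ggrp h n\<^esub> y = (fst x \<circ> fst y, snd x \<circ> snd y)"
  by (cases x, cases y) (simp add: Ggrp_def)

lemma Ggrp_one: "\<one>\<^bsub>Ggrp h n\<^esub> = (id, id)"
  by (simp add: Ggrp_def)

lemma carrier_Ggrp: "carrier (Ggrp h n) = Gcarrier h n"
  by (simp add: Ggrp_def)

lemma group_Ggrp: "group (Ggrp h n)"
proof (rule groupI)
  fix x assume "x \<in> carrier (Ggrp h n)"
  then obtain \<phi> \<psi> where x: "x = (\<phi>, \<psi>)" "\<phi> permutes {..<h}" "\<psi> permutes {..<n}"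
    by (auto simp: carrier_Ggrp Gcarrier_def)
  show "\<exists>y\<in>carrier (Ggrp h n). y \<otimes>\<^bsub>Ggrp h n\<^esub> x = \<one>\<^bsub>Ggrp h n\<^esub>"
    by (rule bexI[of _ "(Hilbert_Choice.inv \<phi>, Hilbert_Choice.inv \<psi>)"])
       (use x in \<open>auto simp: Ggrp_mult Ggrp_one carrier_Ggrp Gcarrier_def permutes_inv permutes_inv_o\<close>)
qed (auto simp: Ggrp_mult Ggrp_one carrier_Ggrp Gcarrier_def o_assoc intro: permutes_compose)

lemma act_in_profiles:
  assumes "p \<in> profiles h n" "g \<in> Gcarrier h n"
  shows "act h g p \<in> profiles h n"
proof -
  obtain \<phi> \<psi> where g: "g = (\<phi>, \<psi>)" "\<phi> permutes {..<h}" "\<psi> permutes {..<n}"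
    using assms(2) by (auto simp: Gcarrier_def)
  have "Hilbert_Choice.inv \<phi> i < h" if "i < h" for i
    using permutes_in_image[OF permutes_inv[OF g(2)]] that by auto
  then show ?thesis
    using assms(1) g by (auto simp: profiles_def act_def intro: permutes_compose)
qed

lemma act_one:
  assumes "p \<in> profiles h n"
  shows "act h \<one>\<^bsub>Ggrp h n\<^esub> p = p"
  using assms by (auto simp: Ggrp_one profiles_def act_def inv_id)

lemma act_mult:
  assumes "g \<in> Gcarrier h n" "k \<in> Gcarrier h n"
  shows "act h (g \<otimes>\<^bsub>Ggrp h n\<^esub> k) p = act h g (act h k p)"
proof -
  obtain \<phi> \<psi> where g: "g = (\<phi>, \<psi>)" "\<phi> permutes {..<h}"
    using assms(1) by (auto simp: Gcarrier_def)
  obtain \<phi>' \<psi>' where k: "k = (\<phi>', \<psi>')" "\<phi>' permutes {..<h}"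
    using assms(2) by (auto simp: Gcarrier_def)
  have "Hilbert_Choice.inv \<phi> i < h" if "i < h" for i
    using permutes_in_image[OF permutes_inv[OF g(2)]] that by auto
  moreover have "Hilbert_Choice.inv (\<phi> \<circ> \<phi>') = Hilbert_Choice.inv \<phi>' \<circ> Hilbert_Choice.inv \<phi>"
    using o_inv_distrib permutes_bij g(2) k(2) by blast
  ultimately show ?thesis
    by (intro ext) (auto simp: act_def Ggrp_mult g k)
qed

lemma act_inv_act:
  assumes "p \<in> profiles h n" "g \<in> Gcarrier h n"
  shows "act h (inv\<^bsub>Ggrp h n\<^esub> g) (act h g p) = p"
proof -
  interpret group "Ggrp h n" by (rule group_Ggrp)
  show ?thesis
    using assms act_mult[of "inv\<^bsub>Ggrp h n\<^esub> g" h n g p] act_one[OF assms(1)]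
    by (simp add: carrier_Ggrp[symmetric])
qed

lemma subgroup_symmetry_group_of: "subgroup (symmetry_group_of h n F) (Ggrp h n)"
proof -
  let ?S = "symmetry_group_of h n F"
  interpret group "Ggrp h n" by (rule group_Ggrp)
  have carrier: "?S \<subseteq> carrier (Ggrp h n)"
    by (auto simp: symmetry_group_of_def carrier_Ggrp)
  have one_mem: "\<one>\<^bsub>Ggrp h n\<^esub> \<in> ?S"
    unfolding symmetry_group_of_def using one_closed act_one by (auto simp: carrier_Ggrp Ggrp_one)
  have mult_mem: "g \<otimes>\<^bsub>Ggrp h n\<^esub> k \<in> ?S" if g: "g \<in> ?S" and k: "k \<in> ?S" for g k
  proof -
    have gG: "g \<in> Gcarrier h n" and kG: "k \<in> Gcarrier h n"
      using g k by (simp_all add: symmetry_group_of_def)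
    have "F (act h (g \<otimes>\<^bsub>Ggrp h n\<^esub> k) p) = snd (g \<otimes>\<^bsub>Ggrp h n\<^esub> k) \<circ> F p"
      if p: "p \<in> profiles h n" for p
      using g k p act_in_profiles[OF p kG] unfolding act_mult[OF gG kG]
      by (simp add: symmetry_group_of_def Ggrp_mult o_assoc)
    then show ?thesis
      using m_closed gG kG by (simp add: symmetry_group_of_def carrier_Ggrp)
  qed
  have inv_mem: "inv\<^bsub>Ggrp h n\<^esub> g \<in> ?S" if g: "g \<in> ?S" for g
  proof -
    let ?k = "inv\<^bsub>Ggrp h n\<^esub> g"
    have gG: "g \<in> Gcarrier h n" and kG: "?k \<in> Gcarrier h n"
      using g inv_closed by (auto simp: symmetry_group_of_def carrier_Ggrp)
    have k_g: "snd ?k \<circ> snd g = id"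
      using l_inv[of g] gG by (simp add: carrier_Ggrp Ggrp_mult Ggrp_one)
    have "F (act h ?k p) = snd ?k \<circ> F p" if p: "p \<in> profiles h n" for p
    proof -
      have "F p = F (act h g (act h ?k p))"
        using act_inv_act[OF p kG] gG by (simp add: carrier_Ggrp[symmetric])
      also have "\<dots> = snd g \<circ> F (act h ?k p)"
        using g act_in_profiles[OF p kG] by (auto simp: symmetry_group_of_def)
      finally show ?thesis
        using k_g by (metis comp_assoc id_comp)
    qed
    then show ?thesis
      using kG by (simp add: symmetry_group_of_def)
  qed
  show ?thesis
    using subgroupI[OF carrier _ inv_mem mult_mem] one_mem by blast
qed

lemma regular_symmetry_group_of:
  assumes "is_SPF h n F"
  shows "regular h n (symmetry_group_of h n F)"
  unfolding regular_def
proof (intro conjI ballI impI subgroup_symmetry_group_of)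
  fix p g assume p: "p \<in> profiles h n" and g: "g \<in> symmetry_group_of h n F" and fix_p: "act h g p = p"
  have "snd g \<circ> F p = F p"
    using g p fix_p by (auto simp: symmetry_group_of_def)
  moreover have "surj (F p)"
    using assms p permutes_surj unfolding is_SPF_def by blast
  ultimately show "snd g = id"
    by (metis surj_fun_eq id_comp)
qed

lemma symmetry_group_of_eq_if_regular_maximal:
  assumes "regular_maximal h n U" "is_SPF h n F" "U_symmetric h n U F"
  shows "symmetry_group_of h n F = U"
proof -
  have "U \<subseteq> Gcarrier h n"
    using assms(1) subgroup.subset by (fastforce simp: regular_maximal_def regular_def carrier_Ggrp)
  then have "U \<subseteq> symmetry_group_of h n F"
    using assms(3) by (auto simp: symmetry_group_of_def U_symmetric_def)
  then show ?thesis
    using assms(1) regular_symmetry_group_of[OF assms(2)] by (simp add: regular_maximal_def)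
qed

lemma regular_snd_eq:
  assumes "regular h n U" "p \<in> profiles h n" "g \<in> U" "k \<in> U" "act h g p = act h k p"
  shows "snd g = snd k"
proof -
  interpret group "Ggrp h n" by (rule group_Ggrp)
  have sub: "subgroup U (Ggrp h n)"
    using assms(1) by (simp add: regular_def)
  have gG: "g \<in> carrier (Ggrp h n)" and kG: "k \<in> carrier (Ggrp h n)"
    using assms(3,4) subgroup.subset[OF sub] by auto
  let ?d = "inv\<^bsub>Ggrp h n\<^esub> k \<otimes>\<^bsub>Ggrp h n\<^esub> g"
  have "act h ?d p = act h (inv\<^bsub>Ggrp h n\<^esub> k) (act h k p)"
    using act_mult[of "inv\<^bsub>Ggrp h n\<^esub> k" h n g p] inv_closed[OF kG] gG assms(5)
    by (simp add: carrier_Ggrp)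
  also have "\<dots> = p"
    using act_inv_act[OF assms(2)] kG by (simp add: carrier_Ggrp)
  moreover have "?d \<in> U"
    using assms(3,4) sub by (simp add: subgroup.m_closed subgroup.m_inv_closed)
  ultimately have "snd ?d = id"
    using assms(1,2) by (auto simp: regular_def)
  moreover have "k \<otimes>\<^bsub>Ggrp h n\<^esub> ?d = g"
    using gG kG by (simp add: m_assoc[symmetric])
  ultimately show ?thesis
    by (metis Ggrp_mult comp_id snd_conv)
qed

definition orbit :: "nat \<Rightarrow> ((nat \<Rightarrow> nat) \<times> (nat \<Rightarrow> nat)) set
    \<Rightarrow> (nat \<Rightarrow> nat \<Rightarrow> nat) \<Rightarrow> (nat \<Rightarrow> nat \<Rightarrow> nat) set" where
  "orbit h U p = (\<lambda>g. act h g p) ` U"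

definition orbit_rep :: "nat \<Rightarrow> ((nat \<Rightarrow> nat) \<times> (nat \<Rightarrow> nat)) set
    \<Rightarrow> (nat \<Rightarrow> nat \<Rightarrow> nat) \<Rightarrow> (nat \<Rightarrow> nat \<Rightarrow> nat)" where
  "orbit_rep h U p = (SOME q. q \<in> orbit h U p)"

definition orbit_SPF :: "nat \<Rightarrow> ((nat \<Rightarrow> nat) \<times> (nat \<Rightarrow> nat)) set
    \<Rightarrow> (nat \<Rightarrow> nat \<Rightarrow> nat) \<Rightarrow> (nat \<Rightarrow> nat)" where
  "orbit_SPF h U p = snd (SOME g. g \<in> U \<and> act h g (orbit_rep h U p) = p)"

lemma orbit_act:
  assumes "subgroup U (Ggrp h n)" "p \<in> profiles h n" "g \<in> U"
  shows "orbit h U (act h g p) = orbit h U p"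
proof -
  have UG: "U \<subseteq> Gcarrier h n"
    using subgroup.subset[OF assms(1)] by (simp add: carrier_Ggrp)
  have orbit_mono: "orbit h U (act h g p) \<subseteq> orbit h U p" if "g \<in> U" for g p
  proof
    fix q assume "q \<in> orbit h U (act h g p)"
    then obtain k where k: "k \<in> U" "q = act h k (act h g p)"
      by (auto simp: orbit_def)
    moreover have "k \<in> Gcarrier h n" "g \<in> Gcarrier h n"
      using k(1) that UG by auto
    ultimately have "q = act h (k \<otimes>\<^bsub>Ggrp h n\<^esub> g) p"
      by (simp add: act_mult)
    moreover have "k \<otimes>\<^bsub>Ggrp h n\<^esub> g \<in> U"
      using k(1) that assms(1) by (simp add: subgroup.m_closed)
    ultimately show "q \<in> orbit h U p"
      by (auto simp: orbit_def)
  qed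
  have "p = act h (inv\<^bsub>Ggrp h n\<^esub> g) (act h g p)"
    using act_inv_act[OF assms(2) subsetD[OF UG assms(3)]] by simp
  moreover have "inv\<^bsub>Ggrp h n\<^esub> g \<in> U"
    using assms(1,3) by (rule subgroup.m_inv_closed)
  ultimately have "orbit h U p \<subseteq> orbit h U (act h g p)"
    using orbit_mono by metis
  then show ?thesis
    using orbit_mono[OF assms(3)] by (rule subset_antisym[rotated])
qed

lemma orbit_rep_in_orbit:
  assumes "subgroup U (Ggrp h n)" "p \<in> profiles h n"
  shows "orbit_rep h U p \<in> orbit h U p"
proof -
  have "p \<in> orbit h U p"
    using act_one[OF assms(2)] subgroup.one_closed[OF assms(1)] by (force simp: orbit_def)
  then show ?thesis
    unfolding orbit_rep_def by (rule someI[where P = "\<lambda>q. q \<in> orbit h U p"])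
qed

lemma orbit_SPF_witness:
  assumes "subgroup U (Ggrp h n)" "p \<in> profiles h n"
  obtains g where "g \<in> U" "act h g (orbit_rep h U p) = p" "orbit_SPF h U p = snd g"
proof -
  obtain k where k: "k \<in> U" "orbit_rep h U p = act h k p"
    using orbit_rep_in_orbit[OF assms] by (auto simp: orbit_def)
  have "inv\<^bsub>Ggrp h n\<^esub> k \<in> U"
    using assms(1) k(1) by (rule subgroup.m_inv_closed)
  moreover have "act h (inv\<^bsub>Ggrp h n\<^esub> k) (orbit_rep h U p) = p"
    using k act_inv_act[OF assms(2)] subgroup.mem_carrier[OF assms(1)] by (simp add: carrier_Ggrp)
  ultimately have "\<exists>g. g \<in> U \<and> act h g (orbit_rep h U p) = p"
    by blast
  then have "(SOME g. g \<in> U \<and> act h g (orbit_rep h U p) = p) \<in> U \<and>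
      act h (SOME g. g \<in> U \<and> act h g (orbit_rep h U p) = p) (orbit_rep h U p) = p"
    by (rule someI_ex)
  then show ?thesis
    using that unfolding orbit_SPF_def by blast
qed

lemma is_SPF_orbit_SPF:
  assumes "subgroup U (Ggrp h n)"
  shows "is_SPF h n (orbit_SPF h U)"
  unfolding is_SPF_def
proof
  fix p assume "p \<in> profiles h n"
  then obtain g where "g \<in> U" "orbit_SPF h U p = snd g"
    using orbit_SPF_witness[OF assms] by metis
  then show "orbit_SPF h U p permutes {..<n}"
    using subgroup.subset[OF assms] by (auto simp: carrier_Ggrp Gcarrier_def)
qed

lemma U_symmetric_orbit_SPF:
  assumes "regular h n U"
  shows "U_symmetric h n U (orbit_SPF h U)"
  unfolding U_symmetric_def
proof (intro ballI)
  fix p g assume p: "p \<in> profiles h n" and g: "g \<in> U"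
  have sub: "subgroup U (Ggrp h n)"
    using assms by (simp add: regular_def)
  then have UG: "U \<subseteq> Gcarrier h n"
    using subgroup.subset by (fastforce simp: carrier_Ggrp)
  let ?q = "act h g p" and ?r = "orbit_rep h U p"
  have q: "?q \<in> profiles h n"
    using act_in_profiles[OF p subsetD[OF UG g]] .
  have r: "?r \<in> profiles h n"
    using orbit_rep_in_orbit[OF sub p] act_in_profiles[OF p] UG by (auto simp: orbit_def)
  have same_rep: "orbit_rep h U ?q = ?r"
    using orbit_act[OF sub p g] by (simp add: orbit_rep_def)
  obtain k where k: "k \<in> U" "act h k ?r = p" "orbit_SPF h U p = snd k"
    using orbit_SPF_witness[OF sub p] .
  obtain k' where k': "k' \<in> U" "act h k' ?r = ?q" "orbit_SPF h U ?q = snd k'"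
    using orbit_SPF_witness[OF sub q] unfolding same_rep .
  have "act h (g \<otimes>\<^bsub>Ggrp h n\<^esub> k) ?r = ?q"
    using act_mult[OF subsetD[OF UG g] subsetD[OF UG k(1)]] k(2) by simp
  moreover have "g \<otimes>\<^bsub>Ggrp h n\<^esub> k \<in> U"
    using sub g k(1) by (rule subgroup.m_closed)
  ultimately have "snd k' = snd (g \<otimes>\<^bsub>Ggrp h n\<^esub> k)"
    using regular_snd_eq[OF assms r k'(1)] k'(2) by simp
  then show "orbit_SPF h U ?q = snd g \<circ> orbit_SPF h U p"
    using k(3) k'(3) by (simp add: Ggrp_mult)
qed

lemma is_symmetry_group_if_regular_maximal:
  assumes "regular_maximal h n U"
  shows "is_symmetry_group h n U"
proof -
  have "regular h n U"
    using assms by (simp add: regular_maximal_def)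
  then have "is_SPF h n (orbit_SPF h U)" "U_symmetric h n U (orbit_SPF h U)"
    using is_SPF_orbit_SPF U_symmetric_orbit_SPF by (auto simp: regular_def)
  then show ?thesis
    using symmetry_group_of_eq_if_regular_maximal[OF assms] by (auto simp: is_symmetry_group_def)
qed

theorem mainTheorem10:
  fixes h n :: nat
  assumes "h \<ge> 2" and "n \<ge> 2"
  shows "(\<forall>U. regular_maximal h n U \<longrightarrow>
            (\<forall>F. is_SPF h n F \<and> U_symmetric h n U F \<longrightarrow> symmetry_group_of h n F = U))
       \<and> (\<forall>U. regular_maximal h n U \<longrightarrow> is_symmetry_group h n U)
       \<and> (\<forall>U. is_symmetry_group h n U \<longrightarrow> regular h n U)
       \<and> {U. is_symmetry_group h n U} \<noteq> {}"
proof -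
  have "is_SPF h n (\<lambda>p. id)"
    by (simp add: is_SPF_def)
  then have "is_symmetry_group h n (symmetry_group_of h n (\<lambda>p. id))"
    by (auto simp: is_symmetry_group_def)
  then show ?thesis
    using symmetry_group_of_eq_if_regular_maximal is_symmetry_group_if_regular_maximal
      regular_symmetry_group_of
    by (auto simp: is_symmetry_group_def)
qed

end
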